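(* Let $m\ge 2$ and let $\langle a,b\mid (ab)^m=(ba)^m\rangle$ be the dihedral Artin group with label $2m$, and let $z_{ab}=(ab)^m$. If $x\in\langle a,z_{ab}\rangle$ is a primitive element of $\langle a,z_{ab}\rangle\cong\mathbb{Z}^2$ admitting an $n$-th root $w\in\langle a,b\rangle$ (i.e. $w^n=x$), then $n\le m$.
   Context: $z_{ab}=(ab)^m$ generates the centre of this dihedral Artin group, and $\langle a,z_{ab}\rangle$ is free abelian of rank 2. An element of a free abelian group is primitive if it is not a proper power of another element of that group. *)

theory Defs
  imports "HOL-Algebra.Algebra"
begin

text \<open>Words over the generators a, b and their formal inverses.
  A letter (g, True) denotes the inverse of generator g.\<close>

datatype gen = GA | GB

type_synonym letter = "gen \<times> bool"

definition ab_word :: "nat \<Rightarrow> letter list" where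
  "ab_word m = concat (replicate m [(GA, False), (GB, False)])"

definition ba_word :: "nat \<Rightarrow> letter list" where
  "ba_word m = concat (replicate m [(GB, False), (GA, False)])"

inductive artin_rel :: "nat \<Rightarrow> letter list \<Rightarrow> letter list \<Rightarrow> bool" for m where
  refl: "artin_rel m w w"
| sym: "artin_rel m u v \<Longrightarrow> artin_rel m v u"
| trans: "artin_rel m u v \<Longrightarrow> artin_rel m v w \<Longrightarrow> artin_rel m u w"
| cancel: "artin_rel m (u @ [(g, e), (g, \<not> e)] @ v) (u @ v)"
| relator: "artin_rel m (u @ ab_word m @ v) (u @ ba_word m @ v)"

definition artin_class :: "nat \<Rightarrow> letter list \<Rightarrow> letter list set" where
  "artin_class m w = {v. artin_rel m w v}"

definition artin_mult :: "nat \<Rightarrow> letter list set \<Rightarrow> letter list set \<Rightarrow> letter list set" where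
  "artin_mult m P Q = {w. \<exists>u\<in>P. \<exists>v\<in>Q. artin_rel m (u @ v) w}"

definition artin_group :: "nat \<Rightarrow> letter list set monoid" where
  "artin_group m = \<lparr> carrier = range (artin_class m),
     monoid.mult = artin_mult m,
     one = artin_class m [] \<rparr>"

definition gen_a :: "nat \<Rightarrow> letter list set" where
  "gen_a m = artin_class m [(GA, False)]"

definition gen_b :: "nat \<Rightarrow> letter list set" where
  "gen_b m = artin_class m [(GB, False)]"

definition z_ab :: "nat \<Rightarrow> letter list set" where
  "z_ab m = (gen_a m \<otimes>\<^bsub>artin_group m\<^esub> gen_b m) [^]\<^bsub>artin_group m\<^esub> m"

definition primitive_in :: "('a, 'b) monoid_scheme \<Rightarrow> 'a set \<Rightarrow> 'a \<Rightarrow> bool" where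
  "primitive_in G H x \<longleftrightarrow> x \<in> H \<and> \<not> (\<exists>y\<in>H. \<exists>k::nat. k \<ge> 2 \<and> x = y [^]\<^bsub>G\<^esub> k)"

end

theory Submission
  imports Defs
begin

text \<open>Counting the exponents of a and of b gives two homomorphisms from the Artin group
  to the integers, sending a to 1 and 0 and z = (ab)^m to m and m.  Since a and z commute,
  every element of the subgroup they generate is a^k z^l, and primitivity forces
  gcd(k, l) = 1.  If a^k z^l = w^n, then n divides both exponent counts k + l m and l m,
  hence n divides k; so n is coprime to l and divides m.\<close>

lemma (in group) int_pow_commutes:
  assumes "x \<otimes> y = y \<otimes> x" "x \<in> carrier G" "y \<in> carrier G"
  shows "x [^] (i::int) \<otimes> y = y \<otimes> x [^] i"
proof (cases i rule: int_cases)
  case (nonneg n)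
  then show ?thesis
    using group_commutes_pow[OF assms, of n] by (simp add: int_pow_int)
next
  case (neg n)
  define p where "p = x [^] Suc n"
  have p: "p \<in> carrier G"
    using assms(2) by (simp add: p_def)
  have commute: "p \<otimes> y = y \<otimes> p"
    unfolding p_def using assms by (rule group_commutes_pow)
  have "p \<otimes> (y \<otimes> inv p) = (p \<otimes> y) \<otimes> inv p"
    using p assms(3) by (simp add: m_assoc)
  also have "\<dots> = y"
    using p assms(3) by (simp add: commute m_assoc)
  finally have "inv p \<otimes> y = y \<otimes> inv p"
    using p assms(3) by (simp add: inv_solve_left')
  moreover have "x [^] i = inv p"
    using assms(2) by (simp add: neg p_def int_pow_neg_int del: of_nat_Suc)
  ultimately show ?thesis
    by simp
qed

lemma (in group) int_pows_commute:
  assumes "x \<otimes> y = y \<otimes> x" "x \<in> carrier G" "y \<in> carrier G"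
  shows "x [^] (i::int) \<otimes> y [^] (j::int) = y [^] j \<otimes> x [^] i"
proof -
  have "y \<otimes> x [^] i = x [^] i \<otimes> y"
    using int_pow_commutes[OF assms] by simp
  from int_pow_commutes[OF this assms(3) int_pow_closed[OF assms(2)]] show ?thesis
    by simp
qed

lemma (in group) int_pow_mult_int_pows:
  assumes "a \<otimes> z = z \<otimes> a" "a \<in> carrier G" "z \<in> carrier G"
  shows "(a [^] (k::int) \<otimes> z [^] (l::int)) [^] (d::int) = a [^] (d * k) \<otimes> z [^] (d * l)"
proof -
  have "a [^] k \<otimes> z [^] l = z [^] l \<otimes> a [^] k"
    using assms by (rule int_pows_commute)
  then have "(a [^] k \<otimes> z [^] l) [^] d = (a [^] k) [^] d \<otimes> (z [^] l) [^] d"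
    by (rule int_pow_mult_distrib) (simp_all add: assms(2,3))
  then show ?thesis
    using assms(2,3) by (simp add: int_pow_pow mult.commute)
qed

lemma (in group) generate_commuting_pair:
  assumes "a \<otimes> z = z \<otimes> a" "a \<in> carrier G" "z \<in> carrier G"
  shows "generate G {a, z} = {a [^] (k::int) \<otimes> z [^] (l::int) | k l. True}"
    (is "_ = ?H")
proof
  have commute_pows: "a [^] i \<otimes> z [^] j = z [^] j \<otimes> a [^] i" for i j :: int
    using assms by (rule int_pows_commute)
  have "subgroup ?H G"
  proof (rule subgroupI)
    fix p q assume "p \<in> ?H" "q \<in> ?H"
    then obtain k l k' l' :: int where p: "p = a [^] k \<otimes> z [^] l" and q: "q = a [^] k' \<otimes> z [^] l'"
      by blast
    have "inv p = z [^] (- l) \<otimes> a [^] (- k)"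
      using assms(2,3) by (simp add: p inv_mult_group int_pow_neg)
    then show "inv p \<in> ?H"
      by (auto simp: commute_pows)
    have "p \<otimes> q = a [^] k \<otimes> (z [^] l \<otimes> a [^] k') \<otimes> z [^] l'"
      using assms(2,3) by (simp add: p q m_assoc)
    also have "\<dots> = a [^] k \<otimes> (a [^] k' \<otimes> z [^] l) \<otimes> z [^] l'"
      by (simp only: commute_pows)
    also have "\<dots> = a [^] (k + k') \<otimes> z [^] (l + l')"
      using assms(2,3) by (simp add: m_assoc int_pow_mult)
    finally show "p \<otimes> q \<in> ?H" by blast
  qed (use assms in auto)
  moreover have "a = a [^] (1::int) \<otimes> z [^] (0::int)" "z = a [^] (0::int) \<otimes> z [^] (1::int)"
    using assms(2,3) by simp_all
  then have "a \<in> ?H" "z \<in> ?H"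
    by blast+
  ultimately show "generate G {a, z} \<subseteq> ?H"
    by (simp add: generate_subgroup_incl)
next
  have gen: "subgroup (generate G {a, z}) G" "a \<in> generate G {a, z}" "z \<in> generate G {a, z}"
    using assms by (auto intro: generate_is_subgroup generate.incl)
  show "?H \<subseteq> generate G {a, z}"
    using subgroup.m_closed[OF gen(1) subgroup_int_pow_closed[OF gen(1,2)]
        subgroup_int_pow_closed[OF gen(1,3)]] by blast
qed

lemma (in group) primitive_in_commuting_pair_coprime:
  assumes "a \<otimes> z = z \<otimes> a" "a \<in> carrier G" "z \<in> carrier G"
    and "primitive_in G (generate G {a, z}) (a [^] (k::int) \<otimes> z [^] (l::int))"
  shows "coprime k l"
proof (rule ccontr)
  define H where "H = generate G {a, z}"
  define x where "x = a [^] k \<otimes> z [^] l"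
  have not_power: "\<not> (\<exists>y\<in>H. \<exists>e::nat. e \<ge> 2 \<and> x = y [^] e)"
    using assms(4) by (simp add: primitive_in_def H_def x_def)
  assume "\<not> coprime k l"
  then have "gcd k l \<noteq> 1" by (simp add: coprime_iff_gcd_eq_1)
  show False
  proof (cases "gcd k l = 0")
    case True
    then have "x = \<one> [^] (2::nat)"
      using assms(2,3) by (simp add: x_def)
    moreover have "\<one> \<in> H"
      unfolding H_def by (rule generate.one)
    ultimately show False
      using not_power by blast
  next
    case False
    define d where "d = gcd k l"
    have "d \<ge> 2"
      using False \<open>gcd k l \<noteq> 1\<close> gcd_ge_0_int[of k l] unfolding d_def by linarith
    define y where "y = a [^] (k div d) \<otimes> z [^] (l div d)"
    have "y \<in> H"
      using generate_commuting_pair[OF assms(1-3)] by (auto simp: H_def y_def)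
    have "y [^] nat d = y [^] d"
      using \<open>d \<ge> 2\<close> by (simp flip: int_pow_int)
    also have "\<dots> = x"
      using assms(1-3) by (simp add: y_def x_def d_def int_pow_mult_int_pows)
    finally have "x = y [^] nat d" ..
    moreover have "nat d \<ge> 2"
      using \<open>d \<ge> 2\<close> by simp
    ultimately show False
      using not_power \<open>y \<in> H\<close> by blast
  qed
qed

lemma artin_rel_context:
  "artin_rel m u v \<Longrightarrow> artin_rel m (p @ u @ q) (p @ v @ q)"
proof (induction rule: artin_rel.induct)
  case (cancel u g e v)
  show ?case
    using artin_rel.cancel[of m "p @ u" g e "v @ q"] by simp
next
  case (relator u v)
  show ?case
    using artin_rel.relator[of m "p @ u" "v @ q"] by simp
qed (auto intro: artin_rel.intros)

lemma artin_rel_append: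
  assumes "artin_rel m u u'" "artin_rel m v v'"
  shows "artin_rel m (u @ v) (u' @ v')"
proof -
  have "artin_rel m ([] @ u @ v) ([] @ u' @ v)" "artin_rel m (u' @ v @ []) (u' @ v' @ [])"
    using assms by (blast intro: artin_rel_context)+
  then show ?thesis
    by (auto intro: artin_rel.trans)
qed

lemma artin_class_eq_iff: "artin_class m u = artin_class m v \<longleftrightarrow> artin_rel m u v"
proof
  assume "artin_class m u = artin_class m v"
  then show "artin_rel m u v"
    using artin_rel.refl[of m v] by (auto simp: artin_class_def)
next
  assume "artin_rel m u v"
  then show "artin_class m u = artin_class m v"
    unfolding artin_class_def by (blast intro: artin_rel.trans artin_rel.sym)
qed

lemma artin_mult_class:
  "artin_mult m (artin_class m u) (artin_class m v) = artin_class m (u @ v)"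
proof
  show "artin_mult m (artin_class m u) (artin_class m v) \<subseteq> artin_class m (u @ v)"
  proof
    fix w
    assume "w \<in> artin_mult m (artin_class m u) (artin_class m v)"
    then obtain u' v' where "artin_rel m u u'" "artin_rel m v v'" "artin_rel m (u' @ v') w"
      by (auto simp: artin_mult_def artin_class_def)
    then show "w \<in> artin_class m (u @ v)"
      by (simp add: artin_class_def artin_rel.trans[OF artin_rel_append])
  qed
  show "artin_class m (u @ v) \<subseteq> artin_mult m (artin_class m u) (artin_class m v)"
    using artin_rel.refl[of m u] artin_rel.refl[of m v]
    by (auto simp: artin_mult_def artin_class_def)
qed

lemma mult_artin_group_class [simp]:
  "artin_class m u \<otimes>\<^bsub>artin_group m\<^esub> artin_class m v = artin_class m (u @ v)"
  by (simp add: artin_group_def artin_mult_class)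

definition inv_word :: "letter list \<Rightarrow> letter list" where
  "inv_word w = rev (map (\<lambda>(g, e). (g, \<not> e)) w)"

lemma artin_rel_inv_word_append: "artin_rel m (inv_word w @ w) []"
proof (induction w)
  case Nil
  show ?case by (simp add: inv_word_def artin_rel.refl)
next
  case (Cons x w)
  obtain g e where x: "x = (g, e)" by fastforce
  have "artin_rel m (inv_word w @ [(g, \<not> e), (g, \<not> \<not> e)] @ w) (inv_word w @ w)"
    by (rule artin_rel.cancel)
  moreover have "inv_word (x # w) @ x # w = inv_word w @ [(g, \<not> e), (g, \<not> \<not> e)] @ w"
    by (simp add: inv_word_def x)
  ultimately show ?case
    using Cons.IH by (metis artin_rel.trans)
qed

lemma group_artin_group: "group (artin_group m)"
proof (rule groupI)
  fix x
  assume "x \<in> carrier (artin_group m)"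
  then obtain u where "x = artin_class m u"
    by (auto simp: artin_group_def)
  then have "artin_class m (inv_word u) \<otimes>\<^bsub>artin_group m\<^esub> x = artin_class m []"
    by (simp add: artin_class_eq_iff artin_rel_inv_word_append)
  then show "\<exists>y\<in>carrier (artin_group m). y \<otimes>\<^bsub>artin_group m\<^esub> x = \<one>\<^bsub>artin_group m\<^esub>"
    by (auto simp: artin_group_def)
qed (auto simp: artin_group_def artin_mult_class)

lemma artin_class_pow:
  "artin_class m u [^]\<^bsub>artin_group m\<^esub> (n::nat) = artin_class m (concat (replicate n u))"
proof (induction n)
  case 0
  show ?case by (simp add: artin_group_def)
next
  case (Suc n)
  have "concat (replicate n u) @ u = concat (replicate (Suc n) u)"
    by (simp add: replicate_append_same[symmetric])
  then show ?case
    using Suc by simp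
qed

lemma z_ab_eq_class: "z_ab m = artin_class m (ab_word m)"
  by (simp add: z_ab_def gen_a_def gen_b_def artin_class_pow ab_word_def)

lemma gen_a_closed: "gen_a m \<in> carrier (artin_group m)"
  and z_ab_closed: "z_ab m \<in> carrier (artin_group m)"
  by (simp_all add: gen_a_def z_ab_eq_class artin_group_def)

lemma gen_a_z_ab_commute:
  "gen_a m \<otimes>\<^bsub>artin_group m\<^esub> z_ab m = z_ab m \<otimes>\<^bsub>artin_group m\<^esub> gen_a m"
proof -
  have "(GA, False) # ba_word m = ab_word m @ [(GA, False)]"
    by (induction m) (auto simp: ab_word_def ba_word_def)
  moreover have "artin_rel m ([(GA, False)] @ ab_word m @ []) ([(GA, False)] @ ba_word m @ [])"
    by (rule artin_rel.relator)
  ultimately show ?thesis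
    by (simp add: z_ab_eq_class gen_a_def artin_class_eq_iff)
qed

definition exponent_sum :: "gen \<Rightarrow> letter list \<Rightarrow> int" where
  "exponent_sum g w = sum_list (map (\<lambda>(h, e). if h = g then if e then -1 else 1 else 0) w)"

lemma exponent_sum_append [simp]:
  "exponent_sum g (u @ v) = exponent_sum g u + exponent_sum g v"
  by (simp add: exponent_sum_def)

lemma exponent_sum_concat_replicate:
  "exponent_sum g (concat (replicate n u)) = int n * exponent_sum g u"
  by (induction n) (simp_all add: exponent_sum_def algebra_simps)

lemma exponent_sum_ab_word: "exponent_sum g (ab_word m) = int m"
  and exponent_sum_ba_word: "exponent_sum g (ba_word m) = int m"
  unfolding ab_word_def ba_word_def exponent_sum_concat_replicate
  by (cases g; simp add: exponent_sum_def)+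

lemma artin_rel_exponent_sum:
  "artin_rel m u v \<Longrightarrow> exponent_sum g u = exponent_sum g v"
proof (induction rule: artin_rel.induct)
  case (cancel u h e v)
  show ?case by (simp add: exponent_sum_def)
qed (simp_all add: exponent_sum_ab_word exponent_sum_ba_word)

definition class_exponent_sum :: "gen \<Rightarrow> letter list set \<Rightarrow> int" where
  "class_exponent_sum g P = exponent_sum g (SOME w. w \<in> P)"

lemma class_exponent_sum_class [simp]:
  "class_exponent_sum g (artin_class m w) = exponent_sum g w"
proof -
  have "w \<in> artin_class m w"
    by (simp add: artin_class_def artin_rel.refl)
  then have "artin_rel m w (SOME v. v \<in> artin_class m w)"
    by (metis artin_class_def mem_Collect_eq someI)
  then show ?thesis
    by (simp add: class_exponent_sum_def artin_rel_exponent_sum)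
qed

lemma group_hom_class_exponent_sum:
  "group_hom (artin_group m) integer_group (class_exponent_sum g)"
proof -
  have "class_exponent_sum g \<in> hom (artin_group m) integer_group"
    by (rule homI) (auto simp: artin_group_def artin_mult_class)
  then show ?thesis
    by (simp add: group_hom_def group_hom_axioms_def group_artin_group)
qed

lemma class_exponent_sum_gen_a: "class_exponent_sum g (gen_a m) = (if g = GA then 1 else 0)"
  by (simp add: gen_a_def exponent_sum_def)

lemma class_exponent_sum_z_ab: "class_exponent_sum g (z_ab m) = int m"
  by (simp add: z_ab_eq_class exponent_sum_ab_word)

lemma class_exponent_sum_nat_pow:
  "w \<in> carrier (artin_group m) \<Longrightarrow>
    class_exponent_sum g (w [^]\<^bsub>artin_group m\<^esub> (n::nat)) = int n * class_exponent_sum g w"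
  using group_hom.hom_nat_pow[OF group_hom_class_exponent_sum] by simp

lemma class_exponent_sum_gen_a_z_ab:
  "class_exponent_sum g
     (gen_a m [^]\<^bsub>artin_group m\<^esub> (k::int) \<otimes>\<^bsub>artin_group m\<^esub> z_ab m [^]\<^bsub>artin_group m\<^esub> (l::int))
   = (if g = GA then k else 0) + l * int m"
proof -
  interpret group "artin_group m"
    by (rule group_artin_group)
  show ?thesis
    using gen_a_closed z_ab_closed
    by (simp add: group_hom.hom_mult[OF group_hom_class_exponent_sum]
        group_hom.hom_int_pow[OF group_hom_class_exponent_sum]
        class_exponent_sum_gen_a class_exponent_sum_z_ab)
qed

lemma dvd_of_dvd_add_mult_coprime:
  fixes d k l m :: int
  assumes "coprime k l" "d dvd k + l * m" "d dvd l * m"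
  shows "d dvd m"
proof -
  have "d dvd k"
    using assms(2,3) by (simp add: dvd_add_left_iff)
  then have "coprime d l"
    using dvd_refl assms(1) by (rule coprime_divisors)
  with assms(3) show ?thesis
    by (simp add: coprime_dvd_mult_right_iff)
qed

theorem lemma5p1:
  fixes m n :: nat and w x :: "letter list set"
  assumes "m \<ge> 2"
    and "primitive_in (artin_group m) (generate (artin_group m) {gen_a m, z_ab m}) x"
    and "w \<in> carrier (artin_group m)"
    and "w [^]\<^bsub>artin_group m\<^esub> n = x"
  shows "n \<le> m"
proof -
  interpret G: group "artin_group m"
    by (rule group_artin_group)
  note pair = gen_a_z_ab_commute[of m] gen_a_closed[of m] z_ab_closed[of m]
  obtain k l :: int
    where x: "x = gen_a m [^]\<^bsub>artin_group m\<^esub> k \<otimes>\<^bsub>artin_group m\<^esub> z_ab m [^]\<^bsub>artin_group m\<^esub> l"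
    using assms(2) by (auto simp: primitive_in_def G.generate_commuting_pair[OF pair])
  have "coprime k l"
    using G.primitive_in_commuting_pair_coprime[OF pair] assms(2) by (simp add: x)
  have exponents: "(if g = GA then k else 0) + l * int m = int n * class_exponent_sum g w" for g
    using class_exponent_sum_nat_pow[OF assms(3), of g n]
    by (simp add: assms(4) x class_exponent_sum_gen_a_z_ab)
  have "int n dvd k + l * int m" "int n dvd l * int m"
    using exponents[of GA] exponents[of GB] by simp_all
  with \<open>coprime k l\<close> have "int n dvd int m"
    by (rule dvd_of_dvd_add_mult_coprime)
  then show ?thesis
    using assms(1) by (simp add: dvd_imp_le)
qed

end
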